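(* For $\phi\in L^\infty$, the operator $V_\phi$ is a Hilbert–Schmidt operator on $H^2$ if and only if $\phi=0$.
   Context: $L^2=L^2(\mathbb{T})$ with orthonormal basis $e_n(z)=z^n$, $n\in\mathbb{Z}$; $H^2$ is the closed span of $\{e_n\}_{n\ge0}$, $P:L^2\to H^2$ the orthogonal projection, $M_\phi$ multiplication by $\phi$. $W:L^2\to L^2$: $We_n=e_{n/2}$ for $n$ even, $0$ for $n$ odd. $K:H^2\to L^2$: $Ke_{2n}=e_n$, $Ke_{2n+1}=e_{-n-1}$ ($n\ge0$). The slant H-Toeplitz operator is $V_\phi=WPM_\phi K:H^2\to H^2$. *)

theory Defs
  imports "HOL-Analysis.Analysis"
begin

text \<open>A function on the unit circle T is represented as phi :: complex => complex, only its
values on T matter, evaluated through t |-> phi (cis t), t in [0, 2 pi], with normalised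
Lebesgue measure.  Elements of L2(T) are represented by their Fourier coefficient sequences
(int => complex) via the Plancherel isometry; e_n is the n-th unit sequence.\<close>

definition in_Linfty :: "(complex \<Rightarrow> complex) \<Rightarrow> bool" where
  "in_Linfty \<phi> \<longleftrightarrow> (\<lambda>t. \<phi> (cis t)) \<in> borel_measurable lborel \<and>
     (\<exists>C. AE t in lborel. t \<in> {0..2*pi} \<longrightarrow> norm (\<phi> (cis t)) \<le> C)"

definition Linfty_zero :: "(complex \<Rightarrow> complex) \<Rightarrow> bool" where
  "Linfty_zero \<phi> \<longleftrightarrow> (AE t in lborel. t \<in> {0..2*pi} \<longrightarrow> \<phi> (cis t) = 0)"

definition fourier_coeff :: "(complex \<Rightarrow> complex) \<Rightarrow> int \<Rightarrow> complex" where
  "fourier_coeff \<phi> k =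
     (LINT t:{0..2*pi}|lborel. \<phi> (cis t) * cis (- (of_int k * t))) / (2 * pi)"

definition basis_e :: "int \<Rightarrow> (int \<Rightarrow> complex)" where
  "basis_e n = (\<lambda>j. if j = n then 1 else 0)"

definition mult_op :: "(complex \<Rightarrow> complex) \<Rightarrow> (int \<Rightarrow> complex) \<Rightarrow> (int \<Rightarrow> complex)" where
  "mult_op \<phi> f = (\<lambda>n. \<Sum>\<^sub>\<infinity>k\<in>UNIV. fourier_coeff \<phi> (n - k) * f k)"

definition proj_H2 :: "(int \<Rightarrow> complex) \<Rightarrow> (int \<Rightarrow> complex)" where
  "proj_H2 f = (\<lambda>n. if n \<ge> 0 then f n else 0)"

text \<open>W e_n = e_(n/2) for n even, 0 for n odd.\<close>
definition W_op :: "(int \<Rightarrow> complex) \<Rightarrow> (int \<Rightarrow> complex)" where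
  "W_op f = (\<lambda>n. f (2 * n))"

text \<open>K e_(2n) = e_n, K e_(2n+1) = e_(-n-1), n >= 0.\<close>
definition K_op :: "(int \<Rightarrow> complex) \<Rightarrow> (int \<Rightarrow> complex)" where
  "K_op f = (\<lambda>n. if n \<ge> 0 then f (2 * n) else f (- 2 * n - 1))"

definition slant_HToeplitz :: "(complex \<Rightarrow> complex) \<Rightarrow> (int \<Rightarrow> complex) \<Rightarrow> (int \<Rightarrow> complex)" where
  "slant_HToeplitz \<phi> = W_op \<circ> proj_H2 \<circ> mult_op \<phi> \<circ> K_op"

definition hilbert_schmidt_H2 :: "((int \<Rightarrow> complex) \<Rightarrow> (int \<Rightarrow> complex)) \<Rightarrow> bool" where
  "hilbert_schmidt_H2 T \<longleftrightarrow>
     (\<lambda>(m, n). (norm (T (basis_e m) n))\<^sup>2) summable_on ({0..} \<times> UNIV)"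

end

theory Submission
  imports Defs
begin

text \<open>In the standard bases, the n-th coordinate of V_phi e_m (m, n >= 0) is c(2n - s(m)),
  where c(k) is the k-th Fourier coefficient of phi and K e_m = e_s(m), s = K_index mapping the
  nonnegative integers onto all of Z. So every coefficient c(k) occurs once in each of the
  infinitely many rows n >= 0, and the Hilbert--Schmidt sum is finite only if all Fourier
  coefficients vanish.

  What remains is uniqueness of Fourier coefficients for bounded functions: a function orthogonal
  to all characters is orthogonal to trigonometric polynomials, hence (Stone--Weierstrass) to
  continuous functions on the circle, hence (dominated convergence) to indicators of arcs and so of
  rays. The positive and negative parts of its real and imaginary parts then define finite measures
  on the line that agree on all rays; so they coincide and the function vanishes a.e.\<close>

definition K_index :: "int \<Rightarrow> int" where
  "K_index m = (if even m then m div 2 else - ((m + 1) div 2))"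

lemma K_op_basis_e: "m \<ge> 0 \<Longrightarrow> K_op (basis_e m) = basis_e (K_index m)"
  unfolding K_op_def basis_e_def K_index_def by (rule ext) (auto, presburger+)

lemma K_index_nonneg_onto: "\<exists>m \<ge> 0. K_index m = k"
proof (cases "k \<ge> 0")
  case True
  then show ?thesis by (intro exI[of _ "2 * k"]) (simp add: K_index_def)
next
  case False
  then show ?thesis by (intro exI[of _ "- 2 * k - 1"]) (auto simp: K_index_def)
qed

lemma mult_op_basis_e: "mult_op \<phi> (basis_e j) = (\<lambda>n. fourier_coeff \<phi> (n - j))"
proof
  fix n
  have "(\<Sum>\<^sub>\<infinity>k. fourier_coeff \<phi> (n - k) * basis_e j k) =
      (\<Sum>\<^sub>\<infinity>k\<in>{j}. fourier_coeff \<phi> (n - k) * basis_e j k)"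
    by (rule infsum_cong_neutral) (auto simp: basis_e_def)
  then show "mult_op \<phi> (basis_e j) n = fourier_coeff \<phi> (n - j)"
    by (simp add: mult_op_def basis_e_def)
qed

lemma slant_HToeplitz_basis_e:
  "m \<ge> 0 \<Longrightarrow> slant_HToeplitz \<phi> (basis_e m) n =
     (if n \<ge> 0 then fourier_coeff \<phi> (2 * n - K_index m) else 0)"
  by (simp add: slant_HToeplitz_def K_op_basis_e mult_op_basis_e W_op_def proj_H2_def)

lemma hilbert_schmidt_slant_HToeplitz_iff:
  "hilbert_schmidt_H2 (slant_HToeplitz \<phi>) \<longleftrightarrow> (\<forall>k. fourier_coeff \<phi> k = 0)"
proof
  assume "\<forall>k. fourier_coeff \<phi> k = 0"
  then show "hilbert_schmidt_H2 (slant_HToeplitz \<phi>)"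
    unfolding hilbert_schmidt_H2_def
    by (subst summable_on_cong[where g = "\<lambda>_. 0"]) (auto simp: slant_HToeplitz_basis_e)
next
  assume hs: "hilbert_schmidt_H2 (slant_HToeplitz \<phi>)"
  show "\<forall>k. fourier_coeff \<phi> k = 0"
  proof
    fix k
    let ?entry = "\<lambda>(m, n). (norm (slant_HToeplitz \<phi> (basis_e m) n))\<^sup>2"
    have "\<forall>n. \<exists>m \<ge> 0. K_index m = 2 * n - k"
      using K_index_nonneg_onto by blast
    then obtain col where col: "\<And>n. col n \<ge> 0 \<and> K_index (col n) = 2 * n - k"
      by (metis (no_types))
    define pos where "pos n = (col n, n)" for n
    have "?entry summable_on pos ` {0..}"
      using hs unfolding hilbert_schmidt_H2_def
      by (rule summable_on_subset_banach) (auto simp: pos_def col)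
    then have "(?entry \<circ> pos) summable_on {0..}"
      by (subst (asm) summable_on_reindex) (auto simp: inj_on_def pos_def)
    also have "(?entry \<circ> pos) summable_on {0..} \<longleftrightarrow>
        (\<lambda>_. (norm (fourier_coeff \<phi> k))\<^sup>2) summable_on {0::int..}"
      by (rule summable_on_cong) (simp add: pos_def col slant_HToeplitz_basis_e)
    finally have "(\<lambda>_. (norm (fourier_coeff \<phi> k))\<^sup>2) summable_on {0::int..}" .
    moreover have "infinite {0::int..}"
      using infinite_Ici by blast
    ultimately have "(norm (fourier_coeff \<phi> k))\<^sup>2 = 0"
      using infsum_diverge_constant by blast
    then show "fourier_coeff \<phi> k = 0"
      by simp
  qed
qed

lemma integrable_mult_bounded:
  fixes F g :: "'a \<Rightarrow> 'b::{real_normed_field, banach, second_countable_topology}"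
  assumes F: "integrable M F" and g: "g \<in> borel_measurable M" and B: "\<And>x. norm (g x) \<le> B"
  shows "integrable M (\<lambda>x. F x * g x)"
proof (rule Bochner_Integration.integrable_bound)
  show "integrable M (\<lambda>x. B * norm (F x))"
    using F by (intro integrable_mult_right integrable_norm)
  show "(\<lambda>x. F x * g x) \<in> borel_measurable M"
    using F g by measurable
  show "AE x in M. norm (F x * g x) \<le> norm (B * norm (F x))"
  proof (intro AE_I2)
    fix x
    have "norm (F x * g x) \<le> norm (F x) * B"
      unfolding norm_mult by (intro mult_left_mono B) simp
    also have "\<dots> \<le> norm (B * norm (F x))"
      by (simp add: abs_mult mult.commute mult_right_mono)
    finally show "norm (F x * g x) \<le> norm (B * norm (F x))" .
  qed
qed

lemma integral_mult_eq_0_LIMSEQ: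
  fixes F :: "'a \<Rightarrow> 'b::{real_normed_field, banach, second_countable_topology}"
  assumes F: "integrable M F"
    and h_meas: "\<And>n. h n \<in> borel_measurable M"
    and h_bound: "\<And>n x. norm (h n x) \<le> B"
    and h_lim: "\<And>x. (\<lambda>n. h n x) \<longlonglongrightarrow> g x"
    and h_orth: "\<And>n. (\<integral>x. F x * h n x \<partial>M) = 0"
  shows "(\<integral>x. F x * g x \<partial>M) = 0"
proof -
  have g_meas: "g \<in> borel_measurable M"
    using h_meas h_lim by (rule borel_measurable_LIMSEQ_metric)
  have "(\<lambda>n. \<integral>x. F x * h n x \<partial>M) \<longlonglongrightarrow> (\<integral>x. F x * g x \<partial>M)"
  proof (rule integral_dominated_convergence[where w = "\<lambda>x. B * norm (F x)"])
    show "(\<lambda>x. F x * g x) \<in> borel_measurable M"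
      and "\<And>n. (\<lambda>x. F x * h n x) \<in> borel_measurable M"
      using F g_meas h_meas by measurable
    show "integrable M (\<lambda>x. B * norm (F x))"
      using F by (intro integrable_mult_right integrable_norm)
    show "AE x in M. (\<lambda>n. F x * h n x) \<longlonglongrightarrow> F x * g x"
      using h_lim by (intro AE_I2 tendsto_mult tendsto_const)
    show "AE x in M. norm (F x * h n x) \<le> B * norm (F x)" for n
    proof (intro AE_I2)
      fix x
      show "norm (F x * h n x) \<le> B * norm (F x)"
        using mult_right_mono[OF h_bound[of n x] norm_ge_zero[of "F x"]]
        by (simp add: norm_mult mult.commute)
    qed
  qed
  then show ?thesis
    by (simp add: h_orth LIMSEQ_const_iff)
qed

lemma emeasure_density_eq_integral:
  fixes h :: "'a \<Rightarrow> real"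
  assumes h: "integrable M h" and h_nonneg: "\<And>x. h x \<ge> 0" and A: "A \<in> sets M"
  shows "emeasure (density M (\<lambda>x. ennreal (h x))) A = ennreal (\<integral>x. h x * indicator A x \<partial>M)"
proof -
  have [measurable]: "h \<in> borel_measurable M"
    using h by simp
  have "emeasure (density M (\<lambda>x. ennreal (h x))) A =
      (\<integral>\<^sup>+ x. ennreal (h x) * indicator A x \<partial>M)"
    using A by (intro emeasure_density) simp_all
  also have "\<dots> = (\<integral>\<^sup>+ x. ennreal (h x * indicator A x) \<partial>M)"
    by (rule nn_integral_cong) (auto simp: indicator_def)
  also have "\<dots> = ennreal (\<integral>x. h x * indicator A x \<partial>M)"
    using A by (intro nn_integral_eq_integral integrable_real_mult_indicator h AE_I2)
      (simp_all add: h_nonneg)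
  finally show ?thesis .
qed

lemma AE_eq_0_if_integral_greaterThan_eq_0:
  fixes g :: "real \<Rightarrow> real"
  assumes g: "integrable lborel g" and rays: "\<And>x. (\<integral>t. g t * indicator {x<..} t \<partial>lborel) = 0"
  shows "AE t in lborel. g t = 0"
proof -
  define g_pos g_neg where "g_pos t = max 0 (g t)" and "g_neg t = max 0 (- g t)" for t
  have int: "integrable lborel g_pos" "integrable lborel g_neg"
    unfolding g_pos_def g_neg_def using g by auto
  have rays_eq:
    "(\<integral>t. g_pos t * indicator {x<..} t \<partial>lborel) = (\<integral>t. g_neg t * indicator {x<..} t \<partial>lborel)" for x
  proof -
    have "(\<lambda>t. g t * indicator {x<..} t) =
        (\<lambda>t. g_pos t * indicator {x<..} t - g_neg t * indicator {x<..} t)"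
      by (auto simp: fun_eq_iff g_pos_def g_neg_def max_def)
    then have "0 = (\<integral>t. g_pos t * indicator {x<..} t - g_neg t * indicator {x<..} t \<partial>lborel)"
      using rays[of x] by simp
    also have "\<dots> =
        (\<integral>t. g_pos t * indicator {x<..} t \<partial>lborel) - (\<integral>t. g_neg t * indicator {x<..} t \<partial>lborel)"
      by (rule Bochner_Integration.integral_diff) (auto intro!: integrable_real_mult_indicator int)
    finally show ?thesis by simp
  qed
  have "density lborel (\<lambda>t. ennreal (g_pos t)) = density lborel (\<lambda>t. ennreal (g_neg t))"
  proof (rule measure_eqI_lessThan)
    fix x
    show "emeasure (density lborel (\<lambda>t. ennreal (g_pos t))) {x<..} < \<infinity>"
      using emeasure_density_eq_integral[OF int(1)] by (simp add: g_pos_def)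
    show "emeasure (density lborel (\<lambda>t. ennreal (g_pos t))) {x<..} =
        emeasure (density lborel (\<lambda>t. ennreal (g_neg t))) {x<..}"
      using emeasure_density_eq_integral[OF int(1)] emeasure_density_eq_integral[OF int(2)] rays_eq[of x]
      by (simp add: g_pos_def g_neg_def)
  qed simp_all
  then have "AE t in lborel. ennreal (g_pos t) = ennreal (g_neg t)"
    using int by (intro sigma_finite_measure.density_unique[OF sigma_finite_lborel]) auto
  then show ?thesis
    by eventually_elim (auto simp: g_pos_def g_neg_def max_def split: if_splits)
qed

lemma cos_less_cos_iff_abs_less:
  fixes \<alpha> x :: real
  assumes "0 \<le> \<alpha>" "\<alpha> \<le> pi" "\<bar>x\<bar> \<le> pi"
  shows "cos \<alpha> < cos x \<longleftrightarrow> \<bar>x\<bar> < \<alpha>"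
  using cos_mono_less_eq[of \<alpha> "\<bar>x\<bar>"] assms by simp

lemma cos_arc_iff_greater:
  fixes a t :: real
  assumes a: "0 < a" "a < 2 * pi" and t: "0 \<le> t" "t < 2 * pi"
  shows "cos ((2 * pi - a) / 2) < cos (t - (2 * pi + a) / 2) \<longleftrightarrow> a < t"
proof -
  define \<alpha> x where "\<alpha> = (2 * pi - a) / 2" and "x = t - (2 * pi + a) / 2"
  have \<alpha>: "0 \<le> \<alpha>" "\<alpha> \<le> pi" and x: "- pi - a / 2 \<le> x" "x < \<alpha>"
    using a t by (simp_all add: \<alpha>_def x_def field_simps)
  show ?thesis
    unfolding \<alpha>_def[symmetric] x_def[symmetric]
  proof (cases "x \<ge> - pi")
    case True
    then have "\<bar>x\<bar> \<le> pi" using x \<alpha> by linarith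
    then have "cos \<alpha> < cos x \<longleftrightarrow> \<bar>x\<bar> < \<alpha>"
      by (rule cos_less_cos_iff_abs_less[OF \<alpha>])
    also have "\<dots> \<longleftrightarrow> - \<alpha> < x"
      using x by auto
    also have "\<dots> \<longleftrightarrow> a < t"
      by (simp add: \<alpha>_def x_def field_simps)
    finally show "cos \<alpha> < cos x \<longleftrightarrow> a < t" .
  next
    case False
    have "\<bar>x + 2 * pi\<bar> \<le> pi" "\<not> \<bar>x + 2 * pi\<bar> < \<alpha>"
      using False x a by (auto simp: \<alpha>_def)
    then have "\<not> cos \<alpha> < cos x"
      using cos_less_cos_iff_abs_less[OF \<alpha>, of "x + 2 * pi"] by simp
    moreover have "t < a"
      using False a by (simp add: x_def field_simps)
    ultimately show "cos \<alpha> < cos x \<longleftrightarrow> a < t"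
      by simp
  qed
qed

inductive trig_poly :: "(real \<Rightarrow> complex) \<Rightarrow> bool" where
  monomial: "trig_poly (\<lambda>t. c * cis (of_int k * t))"
| add: "trig_poly f \<Longrightarrow> trig_poly g \<Longrightarrow> trig_poly (\<lambda>t. f t + g t)"

lemma trig_poly_const: "trig_poly (\<lambda>t. c)"
  using trig_poly.monomial[of c 0] by simp

lemma cis_of_int_mult_add: "cis (of_int k * t) * cis (of_int l * t) = cis (of_int (k + l) * t)"
  by (simp add: cis_mult distrib_right)

lemma trig_poly_mult_monomial:
  "trig_poly g \<Longrightarrow> trig_poly (\<lambda>t. c * cis (of_int k * t) * g t)"
proof (induction rule: trig_poly.induct)
  case (monomial d l)
  have "c * cis (of_int k * t) * (d * cis (of_int l * t)) = (c * d) * cis (of_int (k + l) * t)"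
    for t
    by (metis cis_of_int_mult_add mult.assoc mult.left_commute)
  then show ?case
    by (simp only: trig_poly.monomial)
next
  case (add f g)
  then show ?case
    by (simp add: distrib_left trig_poly.add)
qed

lemma trig_poly_mult: "trig_poly f \<Longrightarrow> trig_poly g \<Longrightarrow> trig_poly (\<lambda>t. f t * g t)"
  by (induction rule: trig_poly.induct) (simp_all add: trig_poly_mult_monomial distrib_right trig_poly.add)

lemma trig_poly_real_polynomial_function:
  "real_polynomial_function p \<Longrightarrow> trig_poly (\<lambda>t. of_real (p (cis t)))"
proof (induction rule: real_polynomial_function.induct)
  case (linear f)
  interpret f: bounded_linear f by fact
  define A B where "A = complex_of_real (f 1)" and "B = complex_of_real (f \<i>)"
  have "of_real (f (cis t)) =
      (A - \<i> * B) / 2 * cis (of_int 1 * t) + (A + \<i> * B) / 2 * cis (of_int (-1) * t)" for t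
  proof -
    have "f (cis t) = f (cos t *\<^sub>R 1 + sin t *\<^sub>R \<i>)"
      by (intro arg_cong[where f = f]) (simp add: complex_eq_iff)
    also have "\<dots> = cos t * f 1 + sin t * f \<i>"
      by (simp add: f.add f.scaleR)
    finally show ?thesis
      by (simp add: A_def B_def complex_eq_iff field_simps)
  qed
  then have "(\<lambda>t. of_real (f (cis t))) =
      (\<lambda>t. (A - \<i> * B) / 2 * cis (of_int 1 * t) + (A + \<i> * B) / 2 * cis (of_int (-1) * t))"
    by blast
  then show ?case
    by (simp only:) (intro trig_poly.intros)
next
  case (const c)
  show ?case by (rule trig_poly_const)
next
  case (add f g)
  then show ?case by (simp add: trig_poly.add)
next
  case (mult f g)
  then show ?case by (simp add: trig_poly_mult)
qed

locale orthogonal_to_characters =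
  fixes F :: "real \<Rightarrow> complex"
  assumes integrable_F: "integrable lborel F"
    and integral_cis_eq_0: "\<And>k::int. (\<integral>t. F t * cis (of_int k * t) \<partial>lborel) = 0"
begin

lemma integrable_mult_trig_poly: "trig_poly h \<Longrightarrow> integrable lborel (\<lambda>t. F t * h t)"
proof (induction rule: trig_poly.induct)
  case (monomial c k)
  have "(\<lambda>t. cis (of_int k * t)) \<in> borel_measurable borel"
    by (intro borel_measurable_continuous_onI continuous_intros)
  then have "integrable lborel (\<lambda>t. F t * cis (of_int k * t))"
    by (intro integrable_mult_bounded[OF integrable_F, where B = 1]) auto
  from integrable_mult_right[OF this, of c] show ?case
    by (simp add: ac_simps)
next
  case (add f g)
  then show ?case
    by (simp add: distrib_left)
qed

lemma integral_mult_trig_poly: "trig_poly h \<Longrightarrow> (\<integral>t. F t * h t \<partial>lborel) = 0"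
proof (induction rule: trig_poly.induct)
  case (monomial c k)
  have "(\<lambda>t. F t * (c * cis (of_int k * t))) = (\<lambda>t. c * (F t * cis (of_int k * t)))"
    by (simp add: fun_eq_iff ac_simps)
  then show ?case
    by (simp only: integral_mult_right_zero integral_cis_eq_0 mult_zero_right)
next
  case (add f g)
  then show ?case
    by (simp add: distrib_left integrable_mult_trig_poly)
qed

lemma integral_mult_continuous_on_circle:
  assumes u: "continuous_on (sphere 0 1) u"
  shows "(\<integral>t. F t * of_real (u (cis t)) \<partial>lborel) = 0"
proof -
  have "bounded (u ` sphere 0 1)"
    by (intro compact_imp_bounded compact_continuous_image u compact_sphere)
  then obtain B where B: "\<And>z. z \<in> sphere 0 1 \<Longrightarrow> \<bar>u z\<bar> \<le> B"
    unfolding bounded_iff real_norm_def by blast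
  have "\<exists>p. real_polynomial_function p \<and> (\<forall>z \<in> sphere 0 1. \<bar>u z - p z\<bar> < inverse (Suc n))"
    for n
  proof -
    have "0 < inverse (real (Suc n))"
      by simp
    then obtain p where "real_polynomial_function p"
      and "\<And>z. z \<in> sphere 0 1 \<Longrightarrow> \<bar>u z - p z\<bar> < inverse (Suc n)"
      by (rule Stone_Weierstrass_real_polynomial_function[OF compact_sphere u]) blast
    then show ?thesis
      by blast
  qed
  then obtain p where p: "\<And>n. real_polynomial_function (p n)"
    and p_approx: "\<And>n z. z \<in> sphere 0 1 \<Longrightarrow> \<bar>u z - p n z\<bar> < inverse (Suc n)"
    by metis
  show ?thesis
  proof (rule integral_mult_eq_0_LIMSEQ[OF integrable_F])
    fix n t
    have "continuous_on UNIV (p n)"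
      by (intro continuous_at_imp_continuous_on ballI continuous_real_polymonial_function p)
    then have "continuous_on UNIV (\<lambda>t. p n (cis t))"
      by (rule continuous_on_compose2) (auto intro: continuous_intros)
    then show "(\<lambda>t. complex_of_real (p n (cis t))) \<in> borel_measurable lborel"
      unfolding measurable_lborel2 by (intro borel_measurable_continuous_onI continuous_intros)
    have "\<bar>p n (cis t)\<bar> \<le> \<bar>u (cis t)\<bar> + \<bar>u (cis t) - p n (cis t)\<bar>"
      by linarith
    also have "\<dots> \<le> B + 1"
      using B[of "cis t"] p_approx[of "cis t" n] inverse_le_1_iff[of "real (Suc n)"] by simp
    finally show "norm (complex_of_real (p n (cis t))) \<le> B + 1"
      by simp
    show "(\<integral>t. F t * complex_of_real (p n (cis t)) \<partial>lborel) = 0"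
      by (intro integral_mult_trig_poly trig_poly_real_polynomial_function p)
  next
    fix t
    have "\<forall>\<^sub>F n in sequentially. norm (u (cis t) - p n (cis t)) \<le> inverse (Suc n)"
      using p_approx[of "cis t"] by (simp add: less_imp_le)
    then have "(\<lambda>n. u (cis t) - p n (cis t)) \<longlonglongrightarrow> 0"
      using LIMSEQ_inverse_real_of_nat by (rule Lim_null_comparison)
    from tendsto_diff[OF tendsto_const[of "u (cis t)"] this]
    have "(\<lambda>n. p n (cis t)) \<longlonglongrightarrow> u (cis t)"
      by simp
    then show "(\<lambda>n. complex_of_real (p n (cis t))) \<longlonglongrightarrow> complex_of_real (u (cis t))"
      by (rule tendsto_of_real)
  qed
qed

lemma integral_mult_indicator_arc: "(\<integral>t. F t * indicator {t. s < cos (t - \<theta>)} t \<partial>lborel) = 0"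
proof -
  define S where "S = {t. s < cos (t - \<theta>)}"
  define u where "u n z = max 0 (min 1 (real (Suc n) * (Re (z * cis (- \<theta>)) - s)))"
    for n :: nat and z :: complex
  have u_cis: "u n (cis t) = max 0 (min 1 (real (Suc n) * (cos (t - \<theta>) - s)))" for n t
    by (simp add: u_def cis_mult)
  have "(\<integral>t. F t * indicator S t \<partial>lborel) = 0"
  proof (rule integral_mult_eq_0_LIMSEQ[OF integrable_F, where B = 1])
    fix n t
    have "continuous_on UNIV (\<lambda>t. complex_of_real (u n (cis t)))"
      unfolding u_cis by (intro continuous_intros)
    then show "(\<lambda>t. complex_of_real (u n (cis t))) \<in> borel_measurable lborel"
      unfolding measurable_lborel2 by (rule borel_measurable_continuous_onI)
    show "norm (complex_of_real (u n (cis t))) \<le> 1"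
      by (simp add: u_def)
    have "continuous_on (sphere 0 1) (u n)"
      unfolding u_def by (intro continuous_intros)
    then show "(\<integral>t. F t * complex_of_real (u n (cis t)) \<partial>lborel) = 0"
      by (rule integral_mult_continuous_on_circle)
  next
    fix t
    show "(\<lambda>n. complex_of_real (u n (cis t))) \<longlonglongrightarrow> indicator S t"
    proof (cases "t \<in> S")
      case True
      then have pos: "cos (t - \<theta>) - s > 0"
        by (simp add: S_def)
      obtain N :: nat where N: "inverse (cos (t - \<theta>) - s) < N"
        using reals_Archimedean2 by blast
      have "u n (cis t) = 1" if "n \<ge> N" for n
      proof -
        have "inverse (cos (t - \<theta>) - s) < real (Suc n)"
          using N that by simp
        then have "1 \<le> real (Suc n) * (cos (t - \<theta>) - s)"
          using pos by (simp add: field_simps)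
        then show ?thesis
          by (simp add: u_cis)
      qed
      then have "\<forall>\<^sub>F n in sequentially. complex_of_real (u n (cis t)) = indicator S t"
        using True eventually_sequentially by auto
      then show ?thesis
        by (rule tendsto_eventually)
    next
      case False
      then have "u n (cis t) = 0" for n
        using mult_nonneg_nonpos[of "real (Suc n)" "cos (t - \<theta>) - s"] by (simp add: S_def u_cis)
      then show ?thesis
        using False by simp
    qed
  qed
  then show ?thesis
    by (simp add: S_def)
qed

end

locale orthogonal_to_characters_on_period = orthogonal_to_characters +
  assumes vanishes_off_period: "\<And>t. t \<notin> {0..2*pi} \<Longrightarrow> F t = 0"
begin

lemma integral_mult_indicator_greaterThan: "(\<integral>t. F t * indicator {x<..} t \<partial>lborel) = 0"
proof -
  have [measurable]: "F \<in> borel_measurable lborel"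
    using integrable_F by simp
  consider "x \<le> 0" | "0 < x" "x < 2 * pi" | "2 * pi \<le> x"
    by linarith
  then show ?thesis
  proof cases
    case 1
    have "(\<integral>t. F t * indicator {x<..} t \<partial>lborel) =
        (\<integral>t. F t * cis (of_int 0 * t) \<partial>lborel)"
    proof (rule integral_cong_AE)
      show "AE t in lborel. F t * indicator {x<..} t = F t * cis (of_int 0 * t)"
        using AE_lborel_singleton[of 0]
        by eventually_elim (use 1 vanishes_off_period in \<open>auto simp: indicator_def\<close>)
    qed simp_all
    then show ?thesis
      by (simp only: integral_cis_eq_0)
  next
    case 2
    define arc where "arc = {t. cos ((2 * pi - x) / 2) < cos (t - (2 * pi + x) / 2)}"
    have "(\<integral>t. F t * indicator {x<..} t \<partial>lborel) =
        (\<integral>t. F t * indicator arc t \<partial>lborel)"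
    proof (rule integral_cong_AE)
      show "AE t in lborel. F t * indicator {x<..} t = F t * indicator arc t"
        using AE_lborel_singleton[of "2 * pi"]
      proof eventually_elim
        case (elim t)
        show ?case
        proof (cases "0 \<le> t \<and> t < 2 * pi")
          case True
          then show ?thesis
            using cos_arc_iff_greater[OF 2] by (simp add: arc_def indicator_def)
        next
          case False
          then show ?thesis
            using elim vanishes_off_period[of t] by auto
        qed
      qed
    qed (simp_all add: arc_def)
    then show ?thesis
      by (simp add: arc_def integral_mult_indicator_arc)
  next
    case 3
    then have "(\<lambda>t. F t * indicator {x<..} t) = (\<lambda>t. 0)"
      using vanishes_off_period by (auto simp: fun_eq_iff indicator_def)
    then show ?thesis
      by simp
  qed
qed

lemma AE_eq_0: "AE t in lborel. F t = 0"
proof -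
  have "AE t in lborel. part (F t) = 0" if part: "bounded_linear part" for part :: "complex \<Rightarrow> real"
  proof (rule AE_eq_0_if_integral_greaterThan_eq_0)
    interpret part: bounded_linear part by fact
    show "integrable lborel (\<lambda>t. part (F t))"
      using part integrable_F by (rule integrable_bounded_linear)
    fix x
    have "(\<integral>t. part (F t) * indicator {x<..} t \<partial>lborel) =
        (\<integral>t. part (F t * indicator {x<..} t) \<partial>lborel)"
      by (intro Bochner_Integration.integral_cong) (auto simp: indicator_def part.zero)
    also have "\<dots> = part (\<integral>t. F t * indicator {x<..} t \<partial>lborel)"
      by (intro integral_bounded_linear part integrable_mult_bounded[OF integrable_F, where B = 1])
        (auto simp: indicator_def)
    finally show "(\<integral>t. part (F t) * indicator {x<..} t \<partial>lborel) = 0"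
      by (simp add: integral_mult_indicator_greaterThan part.zero)
  qed
  from this[OF bounded_linear_Re] this[OF bounded_linear_Im] show ?thesis
    by eventually_elim (simp add: complex_eq_iff)
qed
end

definition period_lift :: "(complex \<Rightarrow> complex) \<Rightarrow> real \<Rightarrow> complex" where
  "period_lift \<phi> t = indicator {0..2*pi} t *\<^sub>R \<phi> (cis t)"

lemma integrable_period_lift:
  assumes "in_Linfty \<phi>"
  shows "integrable lborel (period_lift \<phi>)"
proof -
  have [measurable]: "(\<lambda>t. \<phi> (cis t)) \<in> borel_measurable borel"
    using assms by (simp add: in_Linfty_def)
  obtain C where C: "AE t in lborel. t \<in> {0..2*pi} \<longrightarrow> norm (\<phi> (cis t)) \<le> C"
    using assms unfolding in_Linfty_def by auto
  show ?thesis
  proof (rule Bochner_Integration.integrable_bound)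
    show "integrable lborel (\<lambda>t. indicat_real {0..2*pi} t * C)"
      by (intro integrable_mult_left integrable_real_indicator) auto
    show "period_lift \<phi> \<in> borel_measurable lborel"
      unfolding period_lift_def by measurable
    show "AE t in lborel. norm (period_lift \<phi> t) \<le> norm (indicat_real {0..2*pi} t * C)"
      using C by eventually_elim (auto simp: period_lift_def indicator_def)
  qed
qed

lemma fourier_coeff_period_lift:
  "fourier_coeff \<phi> k = (\<integral>t. period_lift \<phi> t * cis (of_int (- k) * t) \<partial>lborel) / (2 * pi)"
  unfolding fourier_coeff_def set_lebesgue_integral_def period_lift_def by simp

lemma Linfty_zero_iff_AE_period_lift:
  "Linfty_zero \<phi> \<longleftrightarrow> (AE t in lborel. period_lift \<phi> t = 0)"
  unfolding Linfty_zero_def period_lift_def by (simp add: indicator_def imp_conjL)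

lemma fourier_coeff_eq_0_iff_Linfty_zero:
  assumes "in_Linfty \<phi>"
  shows "(\<forall>k. fourier_coeff \<phi> k = 0) \<longleftrightarrow> Linfty_zero \<phi>"
proof
  assume coeff: "\<forall>k. fourier_coeff \<phi> k = 0"
  interpret orthogonal_to_characters_on_period "period_lift \<phi>"
  proof
    show "integrable lborel (period_lift \<phi>)"
      using assms by (rule integrable_period_lift)
    show "(\<integral>t. period_lift \<phi> t * cis (of_int k * t) \<partial>lborel) = 0" for k
      using coeff[rule_format, of "- k"] by (simp add: fourier_coeff_period_lift)
    show "period_lift \<phi> t = 0" if "t \<notin> {0..2*pi}" for t
      using that by (simp add: period_lift_def)
  qed
  show "Linfty_zero \<phi>"
    using AE_eq_0 by (simp add: Linfty_zero_iff_AE_period_lift)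
next
  assume "Linfty_zero \<phi>"
  then have "AE t in lborel. period_lift \<phi> t = 0"
    by (simp add: Linfty_zero_iff_AE_period_lift)
  then have "(\<integral>t. period_lift \<phi> t * cis (of_int (- k) * t) \<partial>lborel) = 0" for k
    by (intro integral_eq_zero_AE) (auto elim: AE_mp)
  then show "\<forall>k. fourier_coeff \<phi> k = 0"
    by (simp add: fourier_coeff_period_lift)
qed

theorem mainTheorem6:
  fixes \<phi> :: "complex \<Rightarrow> complex"
  assumes "in_Linfty \<phi>"
  shows "hilbert_schmidt_H2 (slant_HToeplitz \<phi>) \<longleftrightarrow> Linfty_zero \<phi>"
  using hilbert_schmidt_slant_HToeplitz_iff fourier_coeff_eq_0_iff_Linfty_zero[OF assms] by simp

end
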